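(* In the setting of the context, let $(h_1,h_2)\in\mathbb C(s)^2$ satisfy $\widetilde\gamma_1h_1+\widetilde\gamma_2h_2+\omega=0$, $h_1^{\iota_1}=h_1$, $h_2^{\iota_2}=h_2$. If $P$ is a pole of $h_1$ distinct from $0$ and $\infty$, then there exist integers $m,n\ge0$ such that $\sigma^{-m}P\in\mathcal L_1^-$ and $\sigma^nP\in\mathcal L_1^+$. Likewise, if $P$ is a pole of $h_2$ distinct from $0$ and $\infty$, then there exist integers $m,n\ge0$ such that $\sigma^{-m}P\in\mathcal L_2^-$ and $\sigma^nP\in\mathcal L_2^+$.
   Context: For a genus-zero weighted quadrant walk model (step set one of the five genus-zero sets, step weights $d_{i,j}>0$, Boltzmann weights $a,b>0$), $A=1-1/a$, $B=1-1/b$, $\omega=1-A-B$. $s\mapsto(x(s),y(s))$ is a fixed rational parametrization by $\mathbb P^1$ of the kernel curve (for a fixed real $t$ transcendental over $\mathbb Q((d_{i,j}),a,b)$), with $x(1/s)=x(s)$, $y(q/s)=y(s)$ for a fixed real $q$ not a root of unity; $\iota_1(s)=1/s$, $\iota_2(s)=q/s$, $\sigma(s)=qs$, $h^\tau=h\circ\tau$. $\widetilde\gamma_1=A/x(s)-td_{1,-1}/y(s)$ and $\widetilde\gamma_2=B/y(s)-td_{-1,1}/x(s)$ have divisors $(\widetilde\gamma_1)=P_1+P_2-0-\infty$ and $(\widetilde\gamma_2)=P_3+P_4-0-\infty$ with $P_i\notin\{0,\infty\}$. Define $\mathcal L_1^-=\{P_1,P_2,\iota_2P_3,\iota_2P_4\}$,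 $\mathcal L_1^+=\{\iota_1P_1,\iota_1P_2,\sigma^{-1}P_3,\sigma^{-1}P_4\}$, $\mathcal L_2^-=\{\sigma P_1,\sigma P_2,\iota_2P_3,\iota_2P_4\}$, $\mathcal L_2^+=\{\iota_1P_1,\iota_1P_2,P_3,P_4\}$. *)

theory Defs
  imports "HOL-Complex_Analysis.Complex_Analysis" "HOL-Computational_Algebra.Polynomial"
begin

text \<open>An element of C(s), viewed as a complex function that agrees with a
  quotient of polynomials outside a finite set (values at the finitely many
  exceptional points are irrelevant; identities in C(s) are stated cofinitely).\<close>
definition rational_function :: "(complex \<Rightarrow> complex) \<Rightarrow> bool" where
  "rational_function f \<longleftrightarrow>
     (\<exists>p r :: complex poly. r \<noteq> 0 \<and> (\<forall>\<^sub>F s in cofinite. f s = poly p s / poly r s))"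

definition rf_eq :: "(complex \<Rightarrow> complex) \<Rightarrow> (complex \<Rightarrow> complex) \<Rightarrow> bool" where
  "rf_eq f g \<longleftrightarrow> (\<forall>\<^sub>F s in cofinite. f s = g s)"

text \<open>The automorphisms of P^1 (restricted to finite nonzero points).\<close>
definition iota1 :: "complex \<Rightarrow> complex" where "iota1 s = 1 / s"
definition iota2 :: "complex \<Rightarrow> complex \<Rightarrow> complex" where "iota2 q s = q / s"
definition sigma :: "complex \<Rightarrow> complex \<Rightarrow> complex" where "sigma q s = q * s"
definition sigma_inv :: "complex \<Rightarrow> complex \<Rightarrow> complex" where "sigma_inv q s = s / q"

definition L1m :: "complex \<Rightarrow> complex \<Rightarrow> complex \<Rightarrow> complex \<Rightarrow> complex \<Rightarrow> complex set" where
  "L1m q P1 P2 P3 P4 = {P1, P2, iota2 q P3, iota2 q P4}"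
definition L1p :: "complex \<Rightarrow> complex \<Rightarrow> complex \<Rightarrow> complex \<Rightarrow> complex \<Rightarrow> complex set" where
  "L1p q P1 P2 P3 P4 = {iota1 P1, iota1 P2, sigma_inv q P3, sigma_inv q P4}"
definition L2m :: "complex \<Rightarrow> complex \<Rightarrow> complex \<Rightarrow> complex \<Rightarrow> complex \<Rightarrow> complex set" where
  "L2m q P1 P2 P3 P4 = {sigma q P1, sigma q P2, iota2 q P3, iota2 q P4}"
definition L2p :: "complex \<Rightarrow> complex \<Rightarrow> complex \<Rightarrow> complex \<Rightarrow> complex \<Rightarrow> complex set" where
  "L2p q P1 P2 P3 P4 = {iota1 P1, iota1 P2, P3, P4}"

end

theory Submission
  imports Defs
begin

text \<open>Since \<open>\<gamma>1 h1 + \<gamma>2 h2 = -\<omega>\<close>, a nonzero pole of \<open>h1\<close> other than the zeros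
  \<open>P1, P2\<close> of \<open>\<gamma>1\<close> is a pole of \<open>h2\<close>, and a nonzero pole of \<open>h2\<close> other than
  \<open>P3, P4\<close> is a pole of \<open>h1\<close>; the invariances of \<open>h1\<close> and \<open>h2\<close> make their pole
  sets stable under \<open>\<iota>1\<close> and \<open>\<iota>2\<close> respectively. Chaining these steps along
  \<open>\<sigma>\<^sup>-\<^sup>1 = \<iota>1 \<iota>2\<close> and \<open>\<sigma> = \<iota>2 \<iota>1\<close> shows that \<open>\<sigma>\<^sup>-\<^sup>1\<close> (resp. \<open>\<sigma>\<close>) maps a nonzero
  pole of \<open>h1\<close> outside \<open>L1m\<close> (resp. \<open>L1p\<close>) to a pole of \<open>h1\<close>, and similarly
  for \<open>h2\<close>. As \<open>q\<close> is not a root of unity, the \<open>\<sigma>\<close>-orbit of a nonzero point is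
  infinite in both directions, whereas \<open>h1\<close> and \<open>h2\<close> have only finitely many
  poles; so the orbit of a pole must meet the exceptional set in both directions.\<close>

lemma at_within_le_cofinite: "at (x :: 'a :: t1_space) within A \<le> cofinite"
  by (rule filter_leI)
     (auto intro: eventually_cosparse_imp_eventually_at[where A = UNIV]
           simp: eventually_cosparse eventually_cofinite finite_imp_sparse)

lemma rf_eq_imp_eventually_at: "rf_eq f g \<Longrightarrow> eventually (\<lambda>s. f s = g s) (at x)"
  unfolding rf_eq_def using at_within_le_cofinite by (rule filter_leD)

lemma is_pole_rf_eq: "is_pole f P \<Longrightarrow> rf_eq f g \<Longrightarrow> is_pole g P"
  by (auto intro: is_pole_transform rf_eq_imp_eventually_at)

lemma tendsto_rf_eq: "rf_eq f g \<Longrightarrow> (g \<longlongrightarrow> L) (at x) \<Longrightarrow> (f \<longlongrightarrow> L) (at x)"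
  by (rule Lim_transform_eventually) (auto dest: rf_eq_imp_eventually_at simp: eq_commute)

lemma is_pole_reflection:
  fixes h :: "complex \<Rightarrow> complex"
  assumes pole: "is_pole h P" and "P \<noteq> 0" "c \<noteq> 0" and sym: "rf_eq (\<lambda>s. h (c / s)) h"
  shows "is_pole h (c / P)"
proof -
  have "is_pole (\<lambda>s. h (c / s)) (c / P)"
  proof (rule is_pole_compose[OF pole])
    show "(\<lambda>s. c / s) \<midarrow>c / P\<rightarrow> P"
      using assms by (auto intro!: tendsto_eq_intros)
    show "eventually (\<lambda>s. c / s \<noteq> P) (at (c / P))"
      unfolding eventually_at_topological using assms
      by (intro exI[of _ UNIV]) (auto simp: field_simps)
  qed
  then show ?thesis using sym by (rule is_pole_rf_eq)
qed

lemma finite_poles_rational_function: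
  assumes "rational_function h" shows "finite {P. is_pole h P}"
proof -
  obtain p r :: "complex poly" where "r \<noteq> 0" and h: "rf_eq h (\<lambda>s. poly p s / poly r s)"
    using assms unfolding rational_function_def rf_eq_def by blast
  have "poly r P = 0" if "is_pole h P" for P
  proof (rule ccontr)
    assume "poly r P \<noteq> 0"
    then have "(h \<longlongrightarrow> poly p P / poly r P) (at P)"
      by (intro tendsto_rf_eq[OF h] tendsto_intros) auto
    then show False
      using that not_tendsto_and_filterlim_at_infinity[of "at P" h] by (simp add: is_pole_def)
  qed
  then show ?thesis
    using poly_roots_finite[OF \<open>r \<noteq> 0\<close>] by (metis (mono_tags) finite_subset mem_Collect_eq subsetI)
qed

lemma filterlim_at_infinity_factor:
  fixes f g :: "'a \<Rightarrow> 'b :: real_normed_field"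
  assumes fg: "filterlim (\<lambda>s. f s * g s) at_infinity F" and f: "(f \<longlongrightarrow> c) F"
  shows "filterlim g at_infinity F"
proof -
  have nz: "eventually (\<lambda>s. f s * g s \<noteq> 0) F"
    using fg by (rule filterlim_at_infinity_imp_eventually_ne)
  have "((\<lambda>s. f s * inverse (f s * g s)) \<longlongrightarrow> c * 0) F"
    using f fg by (intro tendsto_mult filterlim_compose[OF tendsto_inverse_0])
  moreover have "eventually (\<lambda>s. f s * inverse (f s * g s) = inverse (g s)) F"
    using nz by eventually_elim (simp add: field_simps)
  ultimately have "((\<lambda>s. inverse (g s)) \<longlongrightarrow> 0) F"
    by (simp add: Lim_transform_eventually)
  moreover have "eventually (\<lambda>s. inverse (g s) \<noteq> 0) F"
    using nz by eventually_elim simp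
  ultimately show ?thesis
    by (simp add: filterlim_at filterlim_inverse_at_iff[symmetric])
qed

lemma filterlim_at_infinity_linear_relation:
  fixes g1 g2 h1 h2 :: "'a \<Rightarrow> 'b :: real_normed_field"
  assumes h1: "filterlim h1 at_infinity F" and g1: "(g1 \<longlongrightarrow> a1) F" "a1 \<noteq> 0"
    and g2: "(g2 \<longlongrightarrow> a2) F"
    and rel: "eventually (\<lambda>s. g1 s * h1 s + g2 s * h2 s + w = 0) F"
  shows "filterlim h2 at_infinity F"
proof -
  have "filterlim (\<lambda>s. g1 s * h1 s + w) at_infinity F"
    using g1 h1 by (intro tendsto_add_filterlim_at_infinity' tendsto_mult_filterlim_at_infinity) auto
  moreover have "eventually (\<lambda>s. g1 s * h1 s + w = - g2 s * h2 s) F"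
    using rel by eventually_elim (simp add: eq_neg_iff_add_eq_0 algebra_simps)
  ultimately have "filterlim (\<lambda>s. - g2 s * h2 s) at_infinity F"
    by (simp add: filterlim_cong)
  then show ?thesis
    using g2 by (rule filterlim_at_infinity_factor[OF _ tendsto_minus])
qed

lemma inj_power_if_not_root_of_unity:
  fixes c :: "'a :: field"
  assumes "\<forall>n::nat. n > 0 \<longrightarrow> c ^ n \<noteq> 1" "c \<noteq> 0"
  shows "inj (\<lambda>k::nat. c ^ k)"
proof -
  have "c ^ j \<noteq> c ^ k" if "j < k" for j k
  proof
    assume "c ^ j = c ^ k"
    also have "c ^ k = c ^ j * c ^ (k - j)"
      using that by (simp flip: power_add)
    finally have "c ^ (k - j) = 1"
      using \<open>c \<noteq> 0\<close> by simp
    then show False using assms(1) that by simp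
  qed
  then show ?thesis
    by (metis injI linorder_neqE_nat)
qed

lemma funpow_sigma: "(sigma c ^^ k) P = c ^ k * P"
  by (induction k) (auto simp: sigma_def)

lemma funpow_sigma_inv: "(sigma_inv c ^^ k) P = P / c ^ k"
  by (induction k) (auto simp: sigma_inv_def field_simps)

lemma funpow_reaches_if_closed_outside:
  assumes "finite S" "P \<in> S" "\<And>Q. Q \<in> S \<Longrightarrow> Q \<notin> L \<Longrightarrow> g Q \<in> S"
    and inj: "inj (\<lambda>k::nat. (g ^^ k) P)"
  shows "\<exists>k. (g ^^ k) P \<in> L"
proof (rule ccontr)
  assume "\<nexists>k. (g ^^ k) P \<in> L"
  then have "(g ^^ k) P \<in> S" for k
    by (induction k) (use assms(2,3) in auto)
  then have "range (\<lambda>k. (g ^^ k) P) \<subseteq> S" by blast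
  then show False
    using range_inj_infinite[OF inj] \<open>finite S\<close> finite_subset by blast
qed

lemma inj_funpow_sigma:
  assumes "\<forall>n::nat. n > 0 \<longrightarrow> c ^ n \<noteq> 1" "c \<noteq> 0" "P \<noteq> 0"
  shows "inj (\<lambda>k. (sigma c ^^ k) P)"
  using inj_power_if_not_root_of_unity[OF assms(1,2)] assms(3)
  by (auto simp: funpow_sigma inj_def)

lemma inj_funpow_sigma_inv:
  assumes "\<forall>n::nat. n > 0 \<longrightarrow> c ^ n \<noteq> 1" "c \<noteq> 0" "P \<noteq> 0"
  shows "inj (\<lambda>k. (sigma_inv c ^^ k) P)"
  using inj_power_if_not_root_of_unity[OF assms(1,2)] assms
  by (auto simp: funpow_sigma_inv inj_def)

lemma divide_ne_if_ne_divide: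
  fixes a b c :: "'a :: field"
  assumes "a \<noteq> 0" "b \<noteq> 0" "b \<noteq> a / c"
  shows "a / b \<noteq> c"
  using assms by (auto simp: field_simps)

locale pole_propagation =
  fixes q P1 P2 P3 P4 :: complex and H1 H2 :: "complex \<Rightarrow> bool"
  assumes not_root_of_unity: "\<forall>n::nat. n > 0 \<longrightarrow> q ^ n \<noteq> 1" and q_nonzero: "q \<noteq> 0"
    and finite_H1: "finite {Q. H1 Q}" and finite_H2: "finite {Q. H2 Q}"
    and H1_imp_H2: "\<And>Q. H1 Q \<Longrightarrow> Q \<noteq> 0 \<Longrightarrow> Q \<noteq> P1 \<Longrightarrow> Q \<noteq> P2 \<Longrightarrow> H2 Q"
    and H2_imp_H1: "\<And>Q. H2 Q \<Longrightarrow> Q \<noteq> 0 \<Longrightarrow> Q \<noteq> P3 \<Longrightarrow> Q \<noteq> P4 \<Longrightarrow> H1 Q"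
    and H1_iota1: "\<And>Q. H1 Q \<Longrightarrow> Q \<noteq> 0 \<Longrightarrow> H1 (iota1 Q)"
    and H2_iota2: "\<And>Q. H2 Q \<Longrightarrow> Q \<noteq> 0 \<Longrightarrow> H2 (iota2 q Q)"
begin

lemma H1_sigma_inv:
  assumes "H1 Q" "Q \<noteq> 0" "Q \<notin> L1m q P1 P2 P3 P4"
  shows "H1 (sigma_inv q Q)"
proof -
  have "H2 (q / Q)"
    using H2_iota2[OF H1_imp_H2] assms by (auto simp: L1m_def iota2_def)
  moreover have "q / Q \<noteq> P3" "q / Q \<noteq> P4"
    using assms q_nonzero by (auto simp: L1m_def iota2_def intro: divide_ne_if_ne_divide)
  ultimately have "H1 (q / Q)"
    using H2_imp_H1 assms q_nonzero by simp
  then show ?thesis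
    using H1_iota1 assms q_nonzero by (force simp: iota1_def sigma_inv_def)
qed

lemma H1_sigma:
  assumes "H1 Q" "Q \<noteq> 0" "Q \<notin> L1p q P1 P2 P3 P4"
  shows "H1 (sigma q Q)"
proof -
  have "1 / Q \<noteq> P1" "1 / Q \<noteq> P2"
    using assms by (auto simp: L1p_def iota1_def intro: divide_ne_if_ne_divide)
  then have "H2 (1 / Q)"
    using H1_imp_H2 H1_iota1 assms by (simp add: iota1_def)
  then have "H2 (q * Q)"
    using H2_iota2 assms by (force simp: iota2_def)
  then show ?thesis
    using H2_imp_H1 assms q_nonzero by (auto simp: L1p_def sigma_def sigma_inv_def field_simps)
qed

lemma H2_sigma_inv:
  assumes "H2 Q" "Q \<noteq> 0" "Q \<notin> L2m q P1 P2 P3 P4"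
  shows "H2 (sigma_inv q Q)"
proof -
  have "q / Q \<noteq> P3" "q / Q \<noteq> P4"
    using assms q_nonzero by (auto simp: L2m_def iota2_def intro: divide_ne_if_ne_divide)
  then have "H1 (q / Q)"
    using H2_imp_H1 H2_iota2 assms q_nonzero by (simp add: iota2_def)
  then have "H1 (Q / q)"
    using H1_iota1 assms q_nonzero by (force simp: iota1_def)
  then show ?thesis
    using H1_imp_H2 assms q_nonzero by (auto simp: L2m_def sigma_def sigma_inv_def field_simps)
qed

lemma H2_sigma:
  assumes "H2 Q" "Q \<noteq> 0" "Q \<notin> L2p q P1 P2 P3 P4"
  shows "H2 (sigma q Q)"
proof -
  have "H1 (1 / Q)"
    using H1_iota1[OF H2_imp_H1] assms by (auto simp: L2p_def iota1_def)
  moreover have "1 / Q \<noteq> P1" "1 / Q \<noteq> P2"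
    using assms by (auto simp: L2p_def iota1_def intro: divide_ne_if_ne_divide)
  ultimately have "H2 (1 / Q)"
    using H1_imp_H2 assms by simp
  then show ?thesis
    using H2_iota2 assms by (force simp: iota2_def sigma_def)
qed

lemma H1_orbit:
  assumes "H1 P" "P \<noteq> 0"
  shows "(\<exists>m. (sigma_inv q ^^ m) P \<in> L1m q P1 P2 P3 P4) \<and> (\<exists>n. (sigma q ^^ n) P \<in> L1p q P1 P2 P3 P4)"
proof -
  have fin: "finite {Q. H1 Q \<and> Q \<noteq> 0}"
    using finite_H1 by (rule rev_finite_subset) auto
  show ?thesis
    using assms q_nonzero H1_sigma_inv H1_sigma
    by (intro conjI funpow_reaches_if_closed_outside[OF fin]
          inj_funpow_sigma_inv inj_funpow_sigma not_root_of_unity)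
       (auto simp: sigma_def sigma_inv_def)
qed

lemma H2_orbit:
  assumes "H2 P" "P \<noteq> 0"
  shows "(\<exists>m. (sigma_inv q ^^ m) P \<in> L2m q P1 P2 P3 P4) \<and> (\<exists>n. (sigma q ^^ n) P \<in> L2p q P1 P2 P3 P4)"
proof -
  have fin: "finite {Q. H2 Q \<and> Q \<noteq> 0}"
    using finite_H2 by (rule rev_finite_subset) auto
  show ?thesis
    using assms q_nonzero H2_sigma_inv H2_sigma
    by (intro conjI funpow_reaches_if_closed_outside[OF fin]
          inj_funpow_sigma_inv inj_funpow_sigma not_root_of_unity)
       (auto simp: sigma_def sigma_inv_def)
qed

end

theorem lemma3p7:
  fixes a b t q :: real
    and d :: "int \<Rightarrow> int \<Rightarrow> real"
    and x y h1 h2 :: "complex \<Rightarrow> complex"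
    and P1 P2 P3 P4 :: complex
  defines "A \<equiv> 1 - 1 / a" and "B \<equiv> 1 - 1 / b"
  defines "\<omega> \<equiv> 1 - A - B"
  defines "\<gamma>1 \<equiv> (\<lambda>s. complex_of_real A / x s - complex_of_real (t * d 1 (-1)) / y s)"
  defines "\<gamma>2 \<equiv> (\<lambda>s. complex_of_real B / y s - complex_of_real (t * d (-1) 1) / x s)"
  assumes d_pos: "d 1 (-1) > 0" "d (-1) 1 > 0"
    and a_pos: "a > 0" and b_pos: "b > 0"
    and q_nonroot: "\<forall>n::nat. n > 0 \<longrightarrow> q ^ n \<noteq> 1" and q_nz: "q \<noteq> 0"
    and x_rat: "rational_function x" and y_rat: "rational_function y"
    and x_sym: "rf_eq (\<lambda>s. x (iota1 s)) x"
    and y_sym: "rf_eq (\<lambda>s. y (iota2 (complex_of_real q) s)) y"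
    and P_nz: "P1 \<noteq> 0" "P2 \<noteq> 0" "P3 \<noteq> 0" "P4 \<noteq> 0"
    and div1: "\<exists>c. c \<noteq> 0 \<and> rf_eq \<gamma>1 (\<lambda>s. c * (s - P1) * (s - P2) / s)"
    and div2: "\<exists>c. c \<noteq> 0 \<and> rf_eq \<gamma>2 (\<lambda>s. c * (s - P3) * (s - P4) / s)"
    and h1_rat: "rational_function h1" and h2_rat: "rational_function h2"
    and eqn: "rf_eq (\<lambda>s. \<gamma>1 s * h1 s + \<gamma>2 s * h2 s + complex_of_real \<omega>) (\<lambda>s. 0)"
    and h1_inv: "rf_eq (\<lambda>s. h1 (iota1 s)) h1"
    and h2_inv: "rf_eq (\<lambda>s. h2 (iota2 (complex_of_real q) s)) h2"
  shows "(\<forall>P. is_pole h1 P \<and> P \<noteq> 0 \<longrightarrow>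
            (\<exists>m::nat. (sigma_inv (complex_of_real q) ^^ m) P \<in> L1m (complex_of_real q) P1 P2 P3 P4) \<and>
            (\<exists>n::nat. (sigma (complex_of_real q) ^^ n) P \<in> L1p (complex_of_real q) P1 P2 P3 P4))
       \<and> (\<forall>P. is_pole h2 P \<and> P \<noteq> 0 \<longrightarrow>
            (\<exists>m::nat. (sigma_inv (complex_of_real q) ^^ m) P \<in> L2m (complex_of_real q) P1 P2 P3 P4) \<and>
            (\<exists>n::nat. (sigma (complex_of_real q) ^^ n) P \<in> L2p (complex_of_real q) P1 P2 P3 P4))"
proof -
  define qc where "qc = complex_of_real q"
  obtain c1 where "c1 \<noteq> 0" and c1: "rf_eq \<gamma>1 (\<lambda>s. c1 * (s - P1) * (s - P2) / s)"
    using div1 by blast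
  obtain c2 where "c2 \<noteq> 0" and c2: "rf_eq \<gamma>2 (\<lambda>s. c2 * (s - P3) * (s - P4) / s)"
    using div2 by blast
  have rel: "\<forall>\<^sub>F s in at Q. \<gamma>1 s * h1 s + \<gamma>2 s * h2 s + complex_of_real \<omega> = 0" for Q
    using rf_eq_imp_eventually_at[OF eqn] .
  have rel': "\<forall>\<^sub>F s in at Q. \<gamma>2 s * h2 s + \<gamma>1 s * h1 s + complex_of_real \<omega> = 0" for Q
    using rel[of Q] by (rule eventually_mono) (simp add: add_ac)
  have \<gamma>1_lim: "(\<gamma>1 \<longlongrightarrow> c1 * (Q - P1) * (Q - P2) / Q) (at Q)" if "Q \<noteq> 0" for Q
    using that by (intro tendsto_rf_eq[OF c1] tendsto_intros) auto
  have \<gamma>2_lim: "(\<gamma>2 \<longlongrightarrow> c2 * (Q - P3) * (Q - P4) / Q) (at Q)" if "Q \<noteq> 0" for Q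
    using that by (intro tendsto_rf_eq[OF c2] tendsto_intros) auto
  interpret pole_propagation qc P1 P2 P3 P4 "is_pole h1" "is_pole h2"
  proof
    show "\<forall>n::nat. n > 0 \<longrightarrow> qc ^ n \<noteq> 1"
      using q_nonroot by (simp add: qc_def flip: of_real_power)
    show "is_pole h2 Q" if "is_pole h1 Q" "Q \<noteq> 0" "Q \<noteq> P1" "Q \<noteq> P2" for Q
      using filterlim_at_infinity_linear_relation[OF _ \<gamma>1_lim _ \<gamma>2_lim rel] that \<open>c1 \<noteq> 0\<close>
      unfolding is_pole_def by simp
    show "is_pole h1 Q" if "is_pole h2 Q" "Q \<noteq> 0" "Q \<noteq> P3" "Q \<noteq> P4" for Q
      using filterlim_at_infinity_linear_relation[OF _ \<gamma>2_lim _ \<gamma>1_lim rel'] that \<open>c2 \<noteq> 0\<close>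
      unfolding is_pole_def by simp
    show "is_pole h1 (iota1 Q)" if "is_pole h1 Q" "Q \<noteq> 0" for Q
      using is_pole_reflection[OF that, of 1] h1_inv by (simp add: iota1_def)
    show "is_pole h2 (iota2 qc Q)" if "is_pole h2 Q" "Q \<noteq> 0" for Q
      using is_pole_reflection[OF that, of qc] h2_inv q_nz by (simp add: iota2_def qc_def)
    show "qc \<noteq> 0"
      using q_nz by (simp add: qc_def)
    show "finite {Q. is_pole h1 Q}" "finite {Q. is_pole h2 Q}"
      using h1_rat h2_rat by (simp_all add: finite_poles_rational_function)
  qed
  show ?thesis
    using H1_orbit H2_orbit unfolding qc_def by blast
qed

end
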